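(* Let $b\in\mathbb{Z}^+$. Then $t(3,5,4b;4n+3)=t(3,5,b;n)$ for every $n\in\mathbb{Z}^+$, and for all complex $q$ with $|q|<1$, $$\sum_{n=0}^{\infty}t(3,5,4b;4n+5)q^n=8\psi(q^b)\big(\varphi(q^{10})\psi(q^{12})+q\varphi(q^6)\psi(q^{20})\big).$$
   Context: $\mathbb{Z}^+$ is the set of positive integers. For $a,b,c\in\mathbb{Z}^+$ and nonnegative integer $n$, $t(a,b,c;n)$ denotes the number of triples $(x,y,z)\in\mathbb{Z}^3$ with $n=a\frac{x(x+1)}2+b\frac{y(y+1)}2+c\frac{z(z+1)}2$. Ramanujan's theta functions are $\varphi(q)=\sum_{n=-\infty}^{\infty}q^{n^2}$ and $\psi(q)=\sum_{n=0}^{\infty}q^{n(n+1)/2}$ for $|q|<1$. *)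

theory Defs
  imports "HOL-Analysis.Analysis"
begin

definition tcount :: "nat \<Rightarrow> nat \<Rightarrow> nat \<Rightarrow> nat \<Rightarrow> nat" where
  "tcount a b c n = card {(x :: int, y :: int, z :: int).
     int n = int a * (x * (x + 1) div 2) + int b * (y * (y + 1) div 2) + int c * (z * (z + 1) div 2)}"

definition ram_phi :: "complex \<Rightarrow> complex" where
  "ram_phi q = (\<Sum>\<^sub>\<infinity>n::int. q ^ nat (n * n))"

definition ram_psi :: "complex \<Rightarrow> complex" where
  "ram_psi q = (\<Sum>n. q ^ (n * (n + 1) div 2))"

end

theory Submission
  imports Defs
begin

(*
  Write X = 2x + 1 and Y = 2y + 1, so that 8 (3 tri x + 5 tri y) + 8 = 3 X^2 + 5 Y^2.  The linear map
  L (U, V) = (U + 5 V, 3 U - V) satisfies 3 L1^2 + 5 L2^2 = 16 (3 U^2 + 5 V^2) and L (L (U, V)) = 16 (U, V).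

  Halving L (after replacing y by -y - 1 when x + y is odd, which does not change tri y) is a bijection
  from all pairs (x, y) onto the pairs with 3 tri x + 5 tri y = 3 (mod 4), sending the value m to
  4 m + 3; carrying z along proves the first identity.

  The pairs with value 1 (mod 4) and x + y odd are exactly the images under L of the pairs (U, V) of
  opposite parity.  If U = 2w + 1 and V = 2s the value is 4 (10 s^2 + 12 tri w) + 5, if U = 2s and
  V = 2w + 1 it is 4 (6 s^2 + 20 tri w + 1) + 5; this gives phi(q^10) 2 psi(q^12) + q phi(q^6) 2 psi(q^20),
  the reflection y -> -y - 1 doubles it, and z contributes the factor 2 psi(q^b).
*)

section \<open>Triangular numbers and the form 3 tri x + 5 tri y\<close>

definition tri :: "int \<Rightarrow> int" where
  "tri x = x * (x + 1) div 2"

definition mirror :: "int \<Rightarrow> int" where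
  "mirror y = - y - 1"

definition tri35 :: "int \<times> int \<Rightarrow> int" where
  "tri35 = (\<lambda>(x, y). 3 * tri x + 5 * tri y)"

fun odd_sum :: "int \<times> int \<Rightarrow> bool" where
  "odd_sum (x, y) \<longleftrightarrow> odd (x + y)"

lemma two_tri: "2 * tri x = x * (x + 1)"
  unfolding tri_def by simp

lemma two_tri35: "2 * tri35 (x, y) = 3 * (x * (x + 1)) + 5 * (y * (y + 1))"
  using two_tri[of x] two_tri[of y] unfolding tri35_def by simp

lemma tri_nonneg: "0 \<le> tri x"
proof -
  have "0 \<le> x * (x + 1)"
    by (cases "0 \<le> x") (auto simp: mult_nonneg_nonneg mult_nonpos_nonpos)
  with two_tri[of x] show ?thesis by linarith
qed

lemma le_tri: "x \<le> tri x"
proof -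
  have "x \<le> x * x"
    by (cases "x \<le> 0") (auto simp: mult_le_cancel_left1)
  with two_tri[of x] show ?thesis by (simp add: algebra_simps)
qed

lemma tri_of_nat: "tri (int n) = int (n * (n + 1) div 2)"
proof -
  have "int (n * (n + 1) div 2) = int n * (int n + 1) div 2"
    by (simp add: zdiv_int algebra_simps)
  then show ?thesis
    unfolding tri_def by simp
qed

lemma tri_mirror [simp]: "tri (mirror y) = tri y"
  unfolding tri_def mirror_def by (simp add: algebra_simps)

lemma abs_le_tri: "\<bar>x\<bar> \<le> tri x + 1"
  using le_tri[of x] le_tri[of "mirror x", unfolded tri_mirror] unfolding mirror_def by linarith

lemma mirror_mirror [simp]: "mirror (mirror y) = y"
  unfolding mirror_def by simp

lemma tri35_apsnd_mirror [simp]: "tri35 (apsnd mirror p) = tri35 p"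
  by (cases p) (simp add: tri35_def)

lemma odd_sum_apsnd_mirror [simp]: "odd_sum (apsnd mirror p) \<longleftrightarrow> \<not> odd_sum p"
  by (cases p) (simp add: mirror_def)

lemma tri_mod_8: "tri (x mod 8) mod 4 = tri x mod 4"
proof -
  define k r where "k = x div 8" and "r = x mod 8"
  have "x = 8 * k + r"
    unfolding k_def r_def by simp
  then have "2 * tri x = 2 * (tri r + 4 * (k * (8 * k + 2 * r + 1)))"
    using two_tri[of x] two_tri[of r] by (simp add: algebra_simps)
  then have "tri x = tri r + 4 * (k * (8 * k + 2 * r + 1))"
    by simp
  then show ?thesis
    unfolding r_def by simp
qed

lemma tri35_residues:
  assumes "odd_sum p"
  shows "tri35 p mod 4 = 3 \<Longrightarrow> (fst p + 5 * snd p) mod 8 = 1"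
    and "tri35 p mod 4 = 1 \<Longrightarrow> (fst p + 5 * snd p) mod 8 = 5"
proof -
  obtain x y where p: "p = (x, y)"
    by fastforce
  define r s where "r = x mod 8" and "s = y mod 8"
  have tri35: "tri35 (x, y) mod 4 = (3 * tri r + 5 * tri s) mod 4"
    unfolding p r_def s_def tri35_def prod.case by (metis tri_mod_8 mod_add_cong mod_mult_right_eq)
  have lin: "(x + 5 * y) mod 8 = (r + 5 * s) mod 8"
    unfolding r_def s_def by (metis mod_add_cong mod_mult_right_eq mod_mod_trivial)
  have "odd (r + s)"
    using assms unfolding p odd_sum.simps r_def s_def by presburger
  moreover have "r \<in> {0..7}" "s \<in> {0..7}"
    unfolding r_def s_def by auto
  ultimately have "r \<in> {0,1,2,3,4,5,6,7}" "s \<in> {0,1,2,3,4,5,6,7}" "odd (r + s)"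
    by auto
  then have "((3 * tri r + 5 * tri s) mod 4 = 3 \<longrightarrow> (r + 5 * s) mod 8 = 1)
           \<and> ((3 * tri r + 5 * tri s) mod 4 = 1 \<longrightarrow> (r + 5 * s) mod 8 = 5)"
    by (auto simp: tri_def)
  then show "tri35 p mod 4 = 3 \<Longrightarrow> (fst p + 5 * snd p) mod 8 = 1"
    and "tri35 p mod 4 = 1 \<Longrightarrow> (fst p + 5 * snd p) mod 8 = 5"
    by (simp_all only: p fst_conv snd_conv tri35 lin)
qed

section \<open>The first identity\<close>

(* In the coordinates X = 2x + 1, Y = 2y + 1 of the header, up is L/2 and down is L/8. *)
fun up :: "int \<times> int \<Rightarrow> int \<times> int" where
  "up (x, y) = ((x + 5 * y + 2) div 2, (3 * x - y) div 2)"

fun down :: "int \<times> int \<Rightarrow> int \<times> int" where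
  "down (x, y) = ((x + 5 * y - 1) div 8, (3 * x - y - 3) div 8)"

lemma up_param: "up (2 * k - y, y) = (k + 2 * y + 1, 3 * k - 2 * y)"
proof -
  have "2 * k - y + 5 * y + 2 = 2 * (k + 2 * y + 1)" "3 * (2 * k - y) - y = 2 * (3 * k - 2 * y)"
    by simp_all
  then show ?thesis
    by (simp only: up.simps) simp
qed

lemma down_param: "down (8 * k + 1 - 5 * y, y) = (k, 3 * k - 2 * y)"
proof -
  have "8 * k + 1 - 5 * y + 5 * y - 1 = 8 * k" "3 * (8 * k + 1 - 5 * y) - y - 3 = 8 * (3 * k - 2 * y)"
    by simp_all
  then show ?thesis
    by (simp only: down.simps) simp
qed

lemma up_on_even_sum:
  assumes "\<not> odd_sum p"
  shows "tri35 (up p) = 4 * tri35 p + 3"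
    and "odd_sum (up p)"
    and "down (up p) = p"
proof -
  obtain x y where xy: "p = (x, y)"
    by fastforce
  with assms have "even (x + y)"
    by simp
  then obtain k where "x + y = 2 * k" ..
  with xy have p: "p = (2 * k - y, y)"
    by simp
  have "2 * tri35 (k + 2 * y + 1, 3 * k - 2 * y) = 4 * (2 * tri35 (2 * k - y, y)) + 6"
    unfolding two_tri35 by (simp add: algebra_simps)
  then show "tri35 (up p) = 4 * tri35 p + 3"
    unfolding p up_param by linarith
  show "odd_sum (up p)"
    unfolding p up_param by simp
  have "down (k + 2 * y + 1, 3 * k - 2 * y) = down (8 * (2 * k - y) + 1 - 5 * (3 * k - 2 * y), 3 * k - 2 * y)"
    by (simp add: algebra_simps)
  then show "down (up p) = p"
    unfolding p up_param down_param by simp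
qed

lemma down_on_odd_sum:
  assumes "odd_sum p" and "(fst p + 5 * snd p) mod 8 = 1"
  shows "\<not> odd_sum (down p)" and "up (down p) = p"
proof -
  obtain k y where p: "p = (8 * k + 1 - 5 * y, y)"
    using assms(2) by (cases p) (metis add.commute add_diff_cancel_right' fst_conv snd_conv mult_div_mod_eq)
  show "\<not> odd_sum (down p)"
    unfolding p down_param by simp
  have "up (k, 3 * k - 2 * y) = up (2 * (2 * k - y) - (3 * k - 2 * y), 3 * k - 2 * y)"
    by (simp add: algebra_simps)
  then show "up (down p) = p"
    unfolding p down_param up_param by (simp add: algebra_simps)
qed

lemma apsnd_mirror_mirror [simp]: "apsnd mirror (apsnd mirror p) = p"
  by (cases p) simp

definition ascend :: "int \<times> int \<Rightarrow> int \<times> int" where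
  "ascend p = (if odd_sum p then apsnd mirror (up (apsnd mirror p)) else up p)"

definition descend :: "int \<times> int \<Rightarrow> int \<times> int" where
  "descend p = (if odd_sum p then down p else apsnd mirror (down (apsnd mirror p)))"

lemma tri35_ascend: "tri35 (ascend p) = 4 * tri35 p + 3"
  by (simp add: ascend_def up_on_even_sum)

lemma descend_ascend: "descend (ascend p) = p"
  by (simp add: ascend_def descend_def up_on_even_sum)

lemma ascend_descend:
  assumes "tri35 p mod 4 = 3"
  shows "ascend (descend p) = p"
proof (cases "odd_sum p")
  case True
  with assms show ?thesis
    by (simp add: ascend_def descend_def down_on_odd_sum tri35_residues)
next
  case False
  let ?p' = "apsnd mirror p"
  have "odd_sum ?p'" "tri35 ?p' mod 4 = 3"
    using False assms by simp_all
  then have "\<not> odd_sum (down ?p')" "up (down ?p') = ?p'"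
    using down_on_odd_sum tri35_residues(1) by blast+
  with False show ?thesis
    by (simp add: ascend_def descend_def)
qed

lemma tri35_descend:
  assumes "tri35 p mod 4 = 3"
  shows "4 * tri35 (descend p) + 3 = tri35 p"
  by (metis assms ascend_descend tri35_ascend)

lemma tcount_3_5_eq_card: "tcount 3 5 c n = card {(p, z). int n = tri35 p + int c * tri z}"
proof -
  have "bij_betw (\<lambda>((x, y), z). (x, y, z)) {(p, z). int n = tri35 p + int c * tri z}
      {(x, y, z). int n = int 3 * (x * (x + 1) div 2) + int 5 * (y * (y + 1) div 2) + int c * (z * (z + 1) div 2)}"
    by (rule bij_betw_byWitness[where f' = "\<lambda>(x, y, z). ((x, y), z)"]) (auto simp: tri35_def tri_def)
  then show ?thesis
    unfolding tcount_def by (rule bij_betw_same_card[symmetric])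
qed

lemma tcount_3_5_4c_4n_3: "tcount 3 5 (4 * c) (4 * n + 3) = tcount 3 5 c n"
proof -
  define S where "S = {(p, z). int n = tri35 p + int c * tri z}"
  define T where "T = {(p, z). int (4 * n + 3) = tri35 p + int (4 * c) * tri z}"
  have "bij_betw (map_prod ascend id) S T"
  proof (rule bij_betw_byWitness[where f' = "map_prod descend id"])
    have T_mod_4: "tri35 p mod 4 = 3" if "(p, z) \<in> T" for p z
    proof -
      from that have "tri35 p = 4 * (int n - int c * tri z) + 3"
        unfolding T_def by (simp add: algebra_simps)
      then show ?thesis
        by (simp only: mod_mult_self4) simp
    qed
    show "\<forall>a \<in> S. map_prod descend id (map_prod ascend id a) = a"
      by (auto simp: descend_ascend)
    show "\<forall>a \<in> T. map_prod ascend id (map_prod descend id a) = a"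
      using T_mod_4 by (auto simp: ascend_descend)
    show "map_prod ascend id ` S \<subseteq> T"
      by (auto simp: S_def T_def tri35_ascend)
    show "map_prod descend id ` T \<subseteq> S"
    proof
      fix u
      assume "u \<in> map_prod descend id ` T"
      then obtain p z where pz: "(p, z) \<in> T" and u: "u = (descend p, z)"
        by auto
      with T_mod_4 tri35_descend have "tri35 p = 4 * tri35 (descend p) + 3"
        by fastforce
      with pz show "u \<in> S"
        unfolding u S_def T_def by simp
    qed
  qed
  then show ?thesis
    unfolding tcount_3_5_eq_card S_def T_def by (rule bij_betw_same_card[symmetric])
qed

section \<open>Theta series as unordered sums\<close>

lemma norm_power_decreasing:
  fixes q :: "'a :: real_normed_div_algebra"
  assumes "norm q \<le> 1" "m \<le> k"
  shows "norm (q ^ k) \<le> norm (q ^ m)"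
  unfolding norm_power using assms by (simp add: power_decreasing)

lemma has_sum_ram_psi:
  assumes "norm q < 1"
  shows "((\<lambda>n. q ^ (n * (n + 1) div 2)) has_sum ram_psi q) UNIV"
proof -
  have "n \<le> n * (n + 1) div 2" for n :: nat
    by (induction n) auto
  with assms have "norm (q ^ (n * (n + 1) div 2)) \<le> norm q ^ n" for n
    by (metis less_imp_le norm_power norm_power_decreasing)
  then have norm_summable: "summable (\<lambda>n. norm (q ^ (n * (n + 1) div 2)))"
    using assms by (intro summable_comparison_test[OF _ summable_geometric]) auto
  show ?thesis
    unfolding ram_psi_def
    by (rule norm_summable_imp_has_sum[OF norm_summable summable_sums[OF summable_norm_cancel[OF norm_summable]]])
qed

lemma has_sum_ram_psi_range:
  assumes "norm q < 1" and "inj h" and "\<And>n. tri (h n) = tri (int n)"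
  shows "((\<lambda>z. q ^ nat (tri z)) has_sum ram_psi q) (range h)"
proof -
  have "(\<lambda>z. q ^ nat (tri z)) \<circ> h = (\<lambda>n. q ^ (n * (n + 1) div 2))"
    using assms(3) by (simp add: fun_eq_iff tri_of_nat)
  with has_sum_ram_psi[OF assms(1)] show ?thesis
    by (simp add: has_sum_reindex[OF \<open>inj h\<close>])
qed

lemma has_sum_ram_psi_int:
  assumes "norm q < 1"
  shows "((\<lambda>z. q ^ nat (tri z)) has_sum 2 * ram_psi q) UNIV"
proof -
  have inj: "inj int" "inj (mirror \<circ> int)"
    by (simp_all add: inj_def mirror_def)
  have "z \<in> range int \<union> range (mirror \<circ> int)" for z
  proof (cases "0 \<le> z")
    case True
    then have "z = int (nat z)"
      by simp
    then show ?thesis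
      by blast
  next
    case False
    then have "z = (mirror \<circ> int) (nat (mirror z))"
      by (simp add: mirror_def)
    then show ?thesis
      by blast
  qed
  then have cover: "range int \<union> range (mirror \<circ> int) = UNIV"
    by blast
  have "((\<lambda>z. q ^ nat (tri z)) has_sum ram_psi q + ram_psi q) (range int \<union> range (mirror \<circ> int))"
  proof (rule has_sum_Un_disjoint)
    show "((\<lambda>z. q ^ nat (tri z)) has_sum ram_psi q) (range int)"
      using assms inj(1) by (rule has_sum_ram_psi_range) simp
    show "((\<lambda>z. q ^ nat (tri z)) has_sum ram_psi q) (range (mirror \<circ> int))"
      using assms inj(2) by (rule has_sum_ram_psi_range) simp
    show "range int \<inter> range (mirror \<circ> int) = {}"
      by (auto simp: mirror_def)
  qed
  then show ?thesis
    unfolding cover mult_2 .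
qed

lemma has_sum_ram_phi:
  assumes "norm q < 1"
  shows "((\<lambda>s. q ^ nat (s * s)) has_sum ram_phi q) UNIV"
proof -
  have "(\<lambda>z. q ^ nat (tri z)) summable_on UNIV"
    using has_sum_ram_psi_int[OF assms] by (rule has_sum_imp_summable)
  then have "(\<lambda>z. norm (q ^ nat (tri z))) summable_on UNIV"
    by (simp add: summable_on_iff_abs_summable_on_complex)
  moreover have "norm (q ^ nat (s * s)) \<le> norm (q ^ nat (tri s))" for s
  proof -
    have "tri s \<le> s * s"
      using two_tri[of s] le_tri[of s] by (simp add: algebra_simps)
    with assms show ?thesis
      by (intro norm_power_decreasing) auto
  qed
  ultimately have "(\<lambda>s. norm (q ^ nat (s * s))) summable_on UNIV"
    by (rule Infinite_Sum.abs_summable_on_comparison_test)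
  then show ?thesis
    unfolding ram_phi_def by (rule has_sum_infsum[OF abs_summable_summable])
qed

lemma has_sum_product:
  fixes f g :: "_ \<Rightarrow> complex"
  assumes f: "(f has_sum a) A" and g: "(g has_sum b) B"
  shows "((\<lambda>(x, y). f x * g y) has_sum a * b) (A \<times> B)"
proof (rule has_sum_SigmaI[where g = "\<lambda>x. f x * b"])
  have abs_f: "(\<lambda>x. norm (f x)) summable_on A" and abs_g: "(\<lambda>y. norm (g y)) summable_on B"
    using f g by (simp_all add: summable_on_iff_abs_summable_on_complex[symmetric] has_sum_imp_summable)
  show "((\<lambda>y. case (x, y) of (x, y) \<Rightarrow> f x * g y) has_sum f x * b) B" for x
    using has_sum_cmult_right[OF g] by simp
  show "((\<lambda>x. f x * b) has_sum a * b) A"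
    using f by (rule has_sum_cmult_left)
  have "(\<lambda>z. norm ((\<lambda>(x, y). f x * g y) z)) summable_on A \<times> B"
    unfolding Infinite_Sum.abs_summable_on_Sigma_iff
  proof
    show "\<forall>x \<in> A. (\<lambda>y. norm (case (x, y) of (x, y) \<Rightarrow> f x * g y)) summable_on B"
      using summable_on_cmult_right[OF abs_g] by (simp add: norm_mult)
    have "(\<lambda>x. norm (f x) * (\<Sum>\<^sub>\<infinity>y\<in>B. norm (g y))) summable_on A"
      using abs_f by (rule summable_on_cmult_left)
    then show "(\<lambda>x. norm (\<Sum>\<^sub>\<infinity>y\<in>B. norm (case (x, y) of (x, y) \<Rightarrow> f x * g y))) summable_on A"
      by (simp add: norm_mult infsum_cmult_right' infsum_nonneg)
  qed
  then show "(\<lambda>(x, y). f x * g y) summable_on A \<times> B"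
    by (rule abs_summable_summable)
qed

lemma sums_card_fibres:
  fixes e :: "'a \<Rightarrow> nat" and u :: "nat \<Rightarrow> 'b :: {semiring_1, topological_comm_monoid_add, t3_space}"
  assumes "((\<lambda>p. u (e p)) has_sum X) S" and "\<And>n. finite {p \<in> S. e p = n}"
  shows "(\<lambda>n. of_nat (card {p \<in> S. e p = n}) * u n) sums X"
proof -
  have inj: "inj_on (\<lambda>p. (e p, p)) S"
    by (rule inj_onI) simp
  have "(((\<lambda>(n, p). u n) \<circ> (\<lambda>p. (e p, p))) has_sum X) S"
    using assms(1) by (simp add: comp_def)
  then have "((\<lambda>(n, p). u n) has_sum X) ((\<lambda>p. (e p, p)) ` S)"
    by (rule iffD2[OF has_sum_reindex[OF inj]])
  also have "(\<lambda>p. (e p, p)) ` S = Sigma UNIV (\<lambda>n. {p \<in> S. e p = n})"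
    by auto
  finally have "((\<lambda>n. of_nat (card {p \<in> S. e p = n}) * u n) has_sum X) UNIV"
    by (rule has_sum_SigmaD) (simp add: assms(2))
  then show ?thesis
    by (rule has_sum_imp_sums)
qed

section \<open>The second identity\<close>

(* L applied to (2w + 1, 2s) and to (2s, 2w + 1), written in the coordinates x, y. *)
definition par_10_12 :: "int \<times> int \<Rightarrow> int \<times> int" where
  "par_10_12 = (\<lambda>(s, w). (w + 5 * s, 3 * w - s + 1))"

definition par_6_20 :: "int \<times> int \<Rightarrow> int \<times> int" where
  "par_6_20 = (\<lambda>(s, w). (s + 5 * w + 2, 3 * s - w - 1))"

lemma tri35_par_10_12: "tri35 (par_10_12 (s, w)) = 4 * (10 * (s * s) + 12 * tri w) + 5"
proof -
  have "2 * tri35 (w + 5 * s, 3 * w - s + 1) = 2 * (4 * (10 * (s * s)) + 5) + 48 * (2 * tri w)"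
    unfolding two_tri35 two_tri by (simp add: algebra_simps)
  then show ?thesis
    unfolding par_10_12_def by simp
qed

lemma tri35_par_6_20: "tri35 (par_6_20 (s, w)) = 4 * (6 * (s * s) + 20 * tri w + 1) + 5"
proof -
  have "2 * tri35 (s + 5 * w + 2, 3 * s - w - 1) = 2 * (4 * (6 * (s * s) + 1) + 5) + 80 * (2 * tri w)"
    unfolding two_tri35 two_tri by (simp add: algebra_simps)
  then show ?thesis
    unfolding par_6_20_def by simp
qed

lemma inj_par_10_12: "inj par_10_12"
  by (auto simp: inj_def par_10_12_def)

lemma inj_par_6_20: "inj par_6_20"
  by (auto simp: inj_def par_6_20_def)

lemma range_par_10_12_par_6_20_disjoint: "range par_10_12 \<inter> range par_6_20 = {}"
proof -
  have "par_10_12 a \<noteq> par_6_20 b" for a b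
  proof
    obtain s w s' w' where "a = (s, w)" "b = (s', w')"
      by fastforce
    moreover assume "par_10_12 a = par_6_20 b"
    ultimately have "16 * w + 5 = 16 * s' - 3"
      unfolding par_10_12_def par_6_20_def by (simp add: algebra_simps)
    then show False
      by presburger
  qed
  then show ?thesis
    by blast
qed

lemma odd_sum_tri35_1_mod_4_eq_range:
  "{p. tri35 p mod 4 = 1 \<and> odd_sum p} = range par_10_12 \<union> range par_6_20"
proof
  have "par_10_12 p \<in> {p. tri35 p mod 4 = 1 \<and> odd_sum p}"
    and "par_6_20 p \<in> {p. tri35 p mod 4 = 1 \<and> odd_sum p}" for p
  proof -
    obtain s w where p: "p = (s, w)"
      by fastforce
    have "tri35 (par_10_12 p) mod 4 = 1" "tri35 (par_6_20 p) mod 4 = 1"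
      unfolding p tri35_par_10_12 tri35_par_6_20 by (simp_all only: mod_mult_self4) simp_all
    moreover have "odd_sum (par_10_12 p)" "odd_sum (par_6_20 p)"
      by (simp_all add: p par_10_12_def par_6_20_def)
    ultimately show "par_10_12 p \<in> {p. tri35 p mod 4 = 1 \<and> odd_sum p}"
      and "par_6_20 p \<in> {p. tri35 p mod 4 = 1 \<and> odd_sum p}"
      by simp_all
  qed
  then show "range par_10_12 \<union> range par_6_20 \<subseteq> {p. tri35 p mod 4 = 1 \<and> odd_sum p}"
    by blast
  show "{p. tri35 p mod 4 = 1 \<and> odd_sum p} \<subseteq> range par_10_12 \<union> range par_6_20"
  proof
    fix p
    assume "p \<in> {p. tri35 p mod 4 = 1 \<and> odd_sum p}"
    moreover obtain x y where p: "p = (x, y)"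
      by fastforce
    ultimately have "(x + 5 * y) mod 8 = 5"
      using tri35_residues(2) by fastforce
    then have "\<exists>w. x + 5 * y = 16 * w + 5 \<or> x + 5 * y = 16 * w + 13"
      by presburger
    then consider w where "x + 5 * y = 16 * w + 5" | w where "x + 5 * y = 16 * w + 13"
      by blast
    then show "p \<in> range par_10_12 \<union> range par_6_20"
    proof cases
      case (1 w)
      then have "p = par_10_12 (3 * w + 1 - y, w)"
        unfolding p par_10_12_def by simp
      then show ?thesis
        by blast
    next
      case (2 w)
      then have "p = par_6_20 (w + 1, 3 * w + 2 - y)"
        unfolding p par_6_20_def by simp
      then show ?thesis
        by blast
    qed
  qed
qed

(* The n with tri35 p = 4n + 5; a junk value unless tri35 p = 1 (mod 4). *)
definition tri35_level :: "int \<times> int \<Rightarrow> nat" where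
  "tri35_level p = nat ((tri35 p - 5) div 4)"

lemma tri35_level_par_10_12: "tri35_level (par_10_12 (s, w)) = 10 * nat (s * s) + 12 * nat (tri w)"
  unfolding tri35_level_def tri35_par_10_12 using tri_nonneg[of w] by (simp add: nat_add_distrib nat_mult_distrib)

lemma tri35_level_par_6_20: "tri35_level (par_6_20 (s, w)) = 1 + 6 * nat (s * s) + 20 * nat (tri w)"
  unfolding tri35_level_def tri35_par_6_20 using tri_nonneg[of w] by (simp add: nat_add_distrib nat_mult_distrib)

lemma has_sum_ram_phi_ram_psi_product:
  fixes q :: complex
  assumes "norm q < 1" and "k > 0" and "l > 0"
  shows "((\<lambda>(s, w). (q ^ k) ^ nat (s * s) * (q ^ l) ^ nat (tri w))
    has_sum ram_phi (q ^ k) * (2 * ram_psi (q ^ l))) UNIV"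
proof -
  have "norm (q ^ k) < 1" "norm (q ^ l) < 1"
    using assms by (simp_all add: norm_power power_less_one_iff)
  then have phi: "((\<lambda>s. (q ^ k) ^ nat (s * s)) has_sum ram_phi (q ^ k)) UNIV"
    and psi: "((\<lambda>w. (q ^ l) ^ nat (tri w)) has_sum 2 * ram_psi (q ^ l)) UNIV"
    by (simp_all only: has_sum_ram_phi has_sum_ram_psi_int)
  from has_sum_product[OF phi psi] show ?thesis
    by simp
qed

lemma has_sum_tri35_level_odd_sum:
  fixes q :: complex
  assumes "norm q < 1"
  shows "((\<lambda>p. q ^ tri35_level p) has_sum
    2 * (ram_phi (q ^ 10) * ram_psi (q ^ 12) + q * ram_phi (q ^ 6) * ram_psi (q ^ 20)))
    {p. tri35 p mod 4 = 1 \<and> odd_sum p}"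
proof -
  have "(\<lambda>p. q ^ tri35_level p) \<circ> par_10_12 = (\<lambda>(s, w). (q ^ 10) ^ nat (s * s) * (q ^ 12) ^ nat (tri w))"
    by (simp add: fun_eq_iff split_paired_All tri35_level_par_10_12 power_add power_mult)
  then have A: "((\<lambda>p. q ^ tri35_level p) has_sum ram_phi (q ^ 10) * (2 * ram_psi (q ^ 12))) (range par_10_12)"
    using has_sum_ram_phi_ram_psi_product[OF assms, of 10 12] by (simp add: has_sum_reindex[OF inj_par_10_12])
  have "(\<lambda>p. q ^ tri35_level p) \<circ> par_6_20
      = (\<lambda>p. q * (case p of (s, w) \<Rightarrow> (q ^ 6) ^ nat (s * s) * (q ^ 20) ^ nat (tri w)))"
    by (simp add: fun_eq_iff split_paired_All tri35_level_par_6_20 power_add power_mult)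
  then have C: "((\<lambda>p. q ^ tri35_level p) has_sum q * (ram_phi (q ^ 6) * (2 * ram_psi (q ^ 20)))) (range par_6_20)"
    using has_sum_cmult_right[OF has_sum_ram_phi_ram_psi_product[OF assms, of 6 20], of q]
    by (simp add: has_sum_reindex[OF inj_par_6_20])
  have "((\<lambda>p. q ^ tri35_level p) has_sum
      ram_phi (q ^ 10) * (2 * ram_psi (q ^ 12)) + q * (ram_phi (q ^ 6) * (2 * ram_psi (q ^ 20))))
      (range par_10_12 \<union> range par_6_20)"
    by (rule has_sum_Un_disjoint[OF A C range_par_10_12_par_6_20_disjoint])
  then show ?thesis
    unfolding odd_sum_tri35_1_mod_4_eq_range by (simp add: algebra_simps)
qed

lemma tri35_1_mod_4_eq_Un_mirror:
  "{p. tri35 p mod 4 = 1}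
    = {p. tri35 p mod 4 = 1 \<and> odd_sum p} \<union> apsnd mirror ` {p. tri35 p mod 4 = 1 \<and> odd_sum p}"
  (is "_ = ?R \<union> apsnd mirror ` ?R")
proof (intro equalityI subsetI)
  fix p
  assume "p \<in> {p. tri35 p mod 4 = 1}"
  then have p: "tri35 p mod 4 = 1"
    by simp
  show "p \<in> ?R \<union> apsnd mirror ` ?R"
  proof (cases "odd_sum p")
    case True
    with p show ?thesis
      by simp
  next
    case False
    with p have "apsnd mirror p \<in> ?R"
      by simp
    then have "apsnd mirror (apsnd mirror p) \<in> apsnd mirror ` ?R"
      by (rule imageI)
    then show ?thesis
      by simp
  qed
next
  fix p
  assume "p \<in> ?R \<union> apsnd mirror ` ?R"
  then consider "p \<in> ?R" | p' where "p' \<in> ?R" and "p = apsnd mirror p'"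
    by blast
  then show "p \<in> {p. tri35 p mod 4 = 1}"
    by cases simp_all
qed

lemma has_sum_tri35_level:
  fixes q :: complex
  assumes "norm q < 1"
  shows "((\<lambda>p. q ^ tri35_level p) has_sum
    4 * (ram_phi (q ^ 10) * ram_psi (q ^ 12) + q * ram_phi (q ^ 6) * ram_psi (q ^ 20)))
    {p. tri35 p mod 4 = 1}"
proof -
  define R where "R = {p. tri35 p mod 4 = 1 \<and> odd_sum p}"
  define X where "X = 2 * (ram_phi (q ^ 10) * ram_psi (q ^ 12) + q * ram_phi (q ^ 6) * ram_psi (q ^ 20))"
  have R: "((\<lambda>p. q ^ tri35_level p) has_sum X) R"
    unfolding R_def X_def using assms by (rule has_sum_tri35_level_odd_sum)
  have "inj_on (apsnd mirror) R"
    by (metis inj_on_inverseI apsnd_mirror_mirror)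
  moreover have "(\<lambda>p. q ^ tri35_level p) \<circ> apsnd mirror = (\<lambda>p. q ^ tri35_level p)"
    by (simp add: fun_eq_iff tri35_level_def)
  ultimately have "((\<lambda>p. q ^ tri35_level p) has_sum X) (apsnd mirror ` R)"
    using R by (simp add: has_sum_reindex)
  moreover have "R \<inter> apsnd mirror ` R = {}"
    unfolding R_def using odd_sum_apsnd_mirror by blast
  ultimately have "((\<lambda>p. q ^ tri35_level p) has_sum X + X) (R \<union> apsnd mirror ` R)"
    using R has_sum_Un_disjoint by blast
  moreover have "X + X = 4 * (ram_phi (q ^ 10) * ram_psi (q ^ 12) + q * ram_phi (q ^ 6) * ram_psi (q ^ 20))"
    unfolding X_def by simp
  ultimately show ?thesis
    unfolding R_def tri35_1_mod_4_eq_Un_mirror by simp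
qed

lemma finite_tri35_reps:
  assumes "c > 0"
  shows "finite {(p, z). int m = tri35 p + int c * tri z}"
proof -
  let ?I = "{- int m - 1 .. int m + 1}"
  have "{(p, z). int m = tri35 p + int c * tri z} \<subseteq> (?I \<times> ?I) \<times> ?I"
  proof
    fix u
    assume u: "u \<in> {(p, z). int m = tri35 p + int c * tri z}"
    obtain x y z where xyz: "u = ((x, y), z)"
      by (metis prod.collapse)
    from u have "int m = 3 * tri x + 5 * tri y + int c * tri z"
      unfolding xyz tri35_def by simp
    moreover have "tri z \<le> int c * tri z"
      using assms tri_nonneg[of z] by (simp add: mult_le_cancel_right1)
    ultimately have "tri x \<le> int m" "tri y \<le> int m" "tri z \<le> int m"
      using tri_nonneg[of x] tri_nonneg[of y] tri_nonneg[of z] by linarith+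
    then show "u \<in> (?I \<times> ?I) \<times> ?I"
      using abs_le_tri[of x] abs_le_tri[of y] abs_le_tri[of z] unfolding xyz by auto
  qed
  then show ?thesis
    by (rule finite_subset) simp
qed

lemma tri35_1_mod_4_ge_5:
  assumes "tri35 p mod 4 = 1"
  shows "5 \<le> tri35 p"
proof -
  obtain x y where p: "p = (x, y)"
    by fastforce
  with assms have "(3 * tri x + 5 * tri y) mod 4 = 1"
    unfolding tri35_def by simp
  with tri_nonneg[of x] tri_nonneg[of y] have "5 \<le> 3 * tri x + 5 * tri y"
    by presburger
  then show ?thesis
    unfolding p tri35_def by simp
qed

lemma tri35_level_eq_iff:
  "tri35 p mod 4 = 1 \<and> tri35_level p + u = n \<longleftrightarrow> int (4 * n + 5) = tri35 p + 4 * int u"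
proof
  assume level: "tri35 p mod 4 = 1 \<and> tri35_level p + u = n"
  then have "tri35 p mod 4 = 1" ..
  then have "tri35 p = 4 * ((tri35 p - 5) div 4) + 5" and "0 \<le> (tri35 p - 5) div 4"
    using tri35_1_mod_4_ge_5[of p] by presburger+
  with level show "int (4 * n + 5) = tri35 p + 4 * int u"
    unfolding tri35_level_def by linarith
next
  assume eq: "int (4 * n + 5) = tri35 p + 4 * int u"
  then have "tri35 p mod 4 = 1"
    by presburger
  moreover from this eq tri35_1_mod_4_ge_5[of p] have "(tri35 p - 5) div 4 = int n - int u" "u \<le> n"
    by simp_all
  ultimately show "tri35 p mod 4 = 1 \<and> tri35_level p + u = n"
    unfolding tri35_level_def by simp
qed

lemma tri35_level_fibre:
  "{x \<in> {p. tri35 p mod 4 = 1} \<times> UNIV. (\<lambda>(p, z). tri35_level p + b * nat (tri z)) x = n}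
    = {(p, z). int (4 * n + 5) = tri35 p + int (4 * b) * tri z}"
proof -
  have "(p, z) \<in> {x \<in> {p. tri35 p mod 4 = 1} \<times> UNIV. (\<lambda>(p, z). tri35_level p + b * nat (tri z)) x = n}
      \<longleftrightarrow> tri35 p mod 4 = 1 \<and> tri35_level p + b * nat (tri z) = n" for p z
    by simp
  also have "\<dots> p z \<longleftrightarrow> int (4 * n + 5) = tri35 p + 4 * int (b * nat (tri z))" for p z
    by (rule tri35_level_eq_iff)
  also have "\<dots> p z \<longleftrightarrow> (p, z) \<in> {(p, z). int (4 * n + 5) = tri35 p + int (4 * b) * tri z}" for p z
    using tri_nonneg[of z] by (simp add: mult.assoc)
  finally show ?thesis
    by auto
qed

lemma sums_tcount_3_5_4b_4n_5:
  fixes q :: complex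
  assumes "b > 0" and "norm q < 1"
  shows "(\<lambda>n. of_nat (tcount 3 5 (4 * b) (4 * n + 5)) * q ^ n) sums
    (8 * ram_psi (q ^ b) * (ram_phi (q ^ 10) * ram_psi (q ^ 12) + q * ram_phi (q ^ 6) * ram_psi (q ^ 20)))"
proof -
  define \<Theta> where "\<Theta> = ram_phi (q ^ 10) * ram_psi (q ^ 12) + q * ram_phi (q ^ 6) * ram_psi (q ^ 20)"
  define R where "R = {p. tri35 p mod 4 = 1}"
  define e where "e = (\<lambda>(p, z). tri35_level p + b * nat (tri z))"
  have fibre: "{x \<in> R \<times> UNIV. e x = n} = {(p, z). int (4 * n + 5) = tri35 p + int (4 * b) * tri z}" for n
    unfolding R_def e_def by (rule tri35_level_fibre)
  have "norm (q ^ b) < 1"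
    using assms by (simp add: norm_power power_less_one_iff)
  then have "((\<lambda>z. (q ^ b) ^ nat (tri z)) has_sum 2 * ram_psi (q ^ b)) UNIV"
    by (rule has_sum_ram_psi_int)
  moreover have "((\<lambda>p. q ^ tri35_level p) has_sum 4 * \<Theta>) R"
    unfolding R_def \<Theta>_def using assms(2) by (rule has_sum_tri35_level)
  ultimately have "((\<lambda>(p, z). q ^ tri35_level p * (q ^ b) ^ nat (tri z)) has_sum 4 * \<Theta> * (2 * ram_psi (q ^ b)))
      (R \<times> UNIV)"
    by (intro has_sum_product)
  then have "((\<lambda>x. q ^ e x) has_sum 8 * ram_psi (q ^ b) * \<Theta>) (R \<times> UNIV)"
    by (simp add: e_def case_prod_beta' power_add power_mult mult_ac)
  moreover have "finite {x \<in> R \<times> UNIV. e x = n}" for n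
    unfolding fibre using assms(1) by (intro finite_tri35_reps) simp
  ultimately have "(\<lambda>n. of_nat (card {x \<in> R \<times> UNIV. e x = n}) * q ^ n) sums (8 * ram_psi (q ^ b) * \<Theta>)"
    by (rule sums_card_fibres)
  then show ?thesis
    unfolding fibre tcount_3_5_eq_card \<Theta>_def .
qed

theorem lemma6p3:
  fixes b :: nat
  assumes "b > 0"
  shows "(\<forall>n::nat. n > 0 \<longrightarrow> tcount 3 5 (4 * b) (4 * n + 3) = tcount 3 5 b n)
    \<and> (\<forall>q::complex. norm q < 1 \<longrightarrow>
         (\<Sum>n. of_nat (tcount 3 5 (4 * b) (4 * n + 5)) * q ^ n) =
         8 * ram_psi (q ^ b) * (ram_phi (q ^ 10) * ram_psi (q ^ 12) + q * ram_phi (q ^ 6) * ram_psi (q ^ 20)))"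
proof (intro conjI allI impI)
  show "tcount 3 5 (4 * b) (4 * n + 3) = tcount 3 5 b n" for n
    by (rule tcount_3_5_4c_4n_3)
  show "(\<Sum>n. of_nat (tcount 3 5 (4 * b) (4 * n + 5)) * q ^ n) =
      8 * ram_psi (q ^ b) * (ram_phi (q ^ 10) * ram_psi (q ^ 12) + q * ram_phi (q ^ 6) * ram_psi (q ^ 20))"
    if "norm q < 1" for q :: complex
    using sums_tcount_3_5_4b_4n_5[OF assms that] by (rule sums_unique[symmetric])
qed

end
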